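(* Let $(a,b)\in\mathbb N^2$ be coprime and $k\ge1$ an integer. (1) If $(d_1,d_2)=(kab+1,kb^2)$ or $(d_1,d_2)=(ka^2,kab+1)$, then $(d_1,d_2)$ and $(ka,kb)$ satisfy the one-bending property. (2) Let $(d_1,d_2)\in\mathbb N^2$ with $d_1b-d_2a\ne0$ and put $m=|d_1b-d_2a|$. If $d_1\ge mka$ in the case $d_1b-d_2a<0$, or $d_2\ge mkb$ in the case $d_1b-d_2a>0$, then $(d_1,d_2)$ and $(ka,kb)$ satisfy the one-bending property. (3) For every integer $m>0$ there exist infinitely many $(d_1,d_2)\in\mathbb N^2$ such that $m=|d_1b-d_2a|$ and $(d_1,d_2)$ and $(ka,kb)$ satisfy the one-bending property.
   Context: Rank-2 scattering diagram: $\Bbbk$ a field of characteristic $0$, $M=\mathbb Z^2$ with basis $e_1,e_2$, $N=\operatorname{Hom}(M,\mathbb Z)$; positive integers $\ell_1,\ell_2$; independent variables $p_{i,k}$ ($i=1,2$, $1\le k\le\ell_i$); $\mathcal M$ their monoid of monomials; $\widehat R$ the completion of $\Bbbk[\mathcal M][x^{\pm1},y^{\pm1}]$ at the ideal generated by the $p_{i,k}$; $x^{(m_1,m_2)}=x^{m_1}y^{m_2}$. Walls: rays $b-\mathbb R_{\ge0}m_0$ or lines $b-\mathbb Rm_0$ ($m_0$ primitive) with functions $1+\sum_{k\ge1}c_kx^{km_0}$, $c_k$ in that ideal; crossing with velocity $v$ acts by $x^m\mapsto x^mf^{\langle n,m\rangle}$ ($n\in N$ primitive orthogonal to the wall, $\langle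 n,v\rangle<0$); consistency: trivial path-ordered products around regular loops. $\mathfrak D=\operatorname{Scat}(P_1,P_2)$, $P_1=1+\sum_{k=1}^{\ell_1}p_{1,k}x^k$, $P_2=1+\sum_{k=1}^{\ell_2}p_{2,k}y^k$: the consistent diagram (unique up to equivalence) made of the lines $(\mathbb Re_1,P_1)$, $(\mathbb Re_2,P_2)$ and rays, chosen with rays $\mathbb R_{\le0}(a,b)$ for distinct coprime $(a,b)\in\mathbb Z_{>0}^2$. A broken line for $m_0\in M\setminus\{0\}$ with endpoint $Q$ is a continuous piecewise linear $\beta:(-\infty,0]\to\mathbb R^2$ avoiding ray endpoints and wall intersections, with breakpoints $\tau_1<\dots<\tau_\ell<0$ and monomials $c_ix^{m_i}$ on linear pieces, $c_0=1$, $\beta(0)=Q$, $\dot\beta=-m_i$, transversal crossings at breakpoints, $c_ix^{m_i}$ a term other than $c_{i-1}x^{m_{i-1}}$ of $c_{i-1}x^{m_{i-1}}\prod_{\mathfrak d\ni\beta(\tau_i)}f_{\mathfrak d}^{\langle n,m_{i-1}\rangle}$ ($n$ primitive normal, $\langle n,m_{i-1}\rangle>0$); it bends at the $\beta(\tau_i)$; initial exponent $m_0$, final exponent $m_\ell$. One-bending property: for $(d_1,d_2)\in\mathbb N^2$, coprime $(a,b)\in\mathbb N^2$ with $d_1b-d_2a\ne0$, $k\ge1$, $(d_1,d_2)$ and $(ka,kb)$ satisfy it if every broken line in $\mathfrak D$ with initial exponent $(-d_1,-d_2)$, final exponent $(ka-d_1,kb-d_2)$ and no bend on the positive coordinate axes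 has exactly one bend. *)

theory Defs
  imports Complex_Main
begin

section \<open>Coefficient ring: the completion R^ of k[M][x^{+-1},y^{+-1}]\<close>

text \<open>A monomial in the variables p_{i,k} is an exponent function on index pairs (i,k).
  An element of R^ is represented by its coefficient function: coefficient of p^alpha x^m.\<close>

type_synonym pmono = "nat \<times> nat \<Rightarrow> nat"
type_synonym 'k pser = "pmono \<Rightarrow> 'k"
type_synonym 'k ser = "pmono \<Rightarrow> int \<times> int \<Rightarrow> 'k"

definition pvars :: "nat \<Rightarrow> nat \<Rightarrow> (nat \<times> nat) set" where
  "pvars l1 l2 = {(i,j). (i = 1 \<and> 1 \<le> j \<and> j \<le> l1) \<or> (i = 2 \<and> 1 \<le> j \<and> j \<le> l2)}"

definition pdeg :: "nat \<Rightarrow> nat \<Rightarrow> pmono \<Rightarrow> nat" where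
  "pdeg l1 l2 \<alpha> = (\<Sum>v\<in>pvars l1 l2. \<alpha> v)"

definition zero_mono :: pmono where "zero_mono = (\<lambda>_. 0)"

definition var_mono :: "nat \<times> nat \<Rightarrow> pmono" where
  "var_mono v = (\<lambda>w. if w = v then 1 else 0)"

definition below :: "pmono \<Rightarrow> pmono set" where
  "below \<alpha> = {\<beta>. \<forall>v. \<beta> v \<le> \<alpha> v}"

definition mdiff :: "pmono \<Rightarrow> pmono \<Rightarrow> pmono" where
  "mdiff \<alpha> \<beta> = (\<lambda>v. \<alpha> v - \<beta> v)"

definition in_Rhat :: "nat \<Rightarrow> nat \<Rightarrow> 'k::zero ser \<Rightarrow> bool" where
  "in_Rhat l1 l2 u \<longleftrightarrow>
     (\<forall>\<alpha> m. u \<alpha> m \<noteq> 0 \<longrightarrow> (\<forall>v. \<alpha> v \<noteq> 0 \<longrightarrow> v \<in> pvars l1 l2)) \<and>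
     (\<forall>\<alpha>. finite {m. u \<alpha> m \<noteq> 0})"

definition ser_zero :: "'k::field ser" where "ser_zero = (\<lambda>\<alpha> m. 0)"

definition ser_one :: "'k::field ser" where
  "ser_one = (\<lambda>\<alpha> m. if \<alpha> = zero_mono \<and> m = (0,0) then 1 else 0)"

definition ser_add :: "'k::field ser \<Rightarrow> 'k ser \<Rightarrow> 'k ser" where
  "ser_add u v = (\<lambda>\<alpha> m. u \<alpha> m + v \<alpha> m)"

definition ser_sub :: "'k::field ser \<Rightarrow> 'k ser \<Rightarrow> 'k ser" where
  "ser_sub u v = (\<lambda>\<alpha> m. u \<alpha> m - v \<alpha> m)"

text \<open>Product (well defined on R^: finitely many beta below alpha, finitely many m1).\<close>
definition ser_mul :: "'k::field ser \<Rightarrow> 'k ser \<Rightarrow> 'k ser" where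
  "ser_mul u v = (\<lambda>\<alpha> m. \<Sum>\<beta>\<in>below \<alpha>. \<Sum>m1\<in>{m1. u \<beta> m1 \<noteq> 0}.
      u \<beta> m1 * v (mdiff \<alpha> \<beta>) (fst m - fst m1, snd m - snd m1))"

fun ser_pow :: "'k::field ser \<Rightarrow> nat \<Rightarrow> 'k ser" where
  "ser_pow u 0 = ser_one"
| "ser_pow u (Suc n) = ser_mul u (ser_pow u n)"

text \<open>Reduction modulo I^N (I the ideal generated by the p_{i,k}).\<close>
definition ser_trunc :: "nat \<Rightarrow> nat \<Rightarrow> nat \<Rightarrow> 'k::field ser \<Rightarrow> 'k ser" where
  "ser_trunc l1 l2 N u = (\<lambda>\<alpha> m. if pdeg l1 l2 \<alpha> < N then u \<alpha> m else 0)"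

definition in_RN :: "nat \<Rightarrow> nat \<Rightarrow> nat \<Rightarrow> 'k::field ser \<Rightarrow> bool" where
  "in_RN l1 l2 N u \<longleftrightarrow> in_Rhat l1 l2 u \<and> (\<forall>\<alpha> m. u \<alpha> m \<noteq> 0 \<longrightarrow> pdeg l1 l2 \<alpha> < N)"

fun geom_sum :: "'k::field ser \<Rightarrow> nat \<Rightarrow> 'k ser" where
  "geom_sum g 0 = ser_zero"
| "geom_sum g (Suc j) = ser_add (geom_sum g j) (ser_pow g j)"

text \<open>Inverse of f = 1 + g (g in I) modulo I^N: sum_{j<N} (1-f)^j.\<close>
definition ser_inv_trunc :: "nat \<Rightarrow> nat \<Rightarrow> nat \<Rightarrow> 'k::field ser \<Rightarrow> 'k ser" where
  "ser_inv_trunc l1 l2 N f = ser_trunc l1 l2 N (geom_sum (ser_sub ser_one f) N)"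

definition ser_ipow :: "nat \<Rightarrow> nat \<Rightarrow> nat \<Rightarrow> 'k::field ser \<Rightarrow> int \<Rightarrow> 'k ser" where
  "ser_ipow l1 l2 N f e = ser_trunc l1 l2 N
     (if e \<ge> 0 then ser_pow f (nat e) else ser_pow (ser_inv_trunc l1 l2 N f) (nat (- e)))"

section \<open>Lattices M, N and wall-crossing automorphisms\<close>

definition ip :: "int \<times> int \<Rightarrow> int \<times> int \<Rightarrow> int" where
  "ip n m = fst n * fst m + snd n * snd m"

definition perp :: "int \<times> int \<Rightarrow> int \<times> int" where
  "perp d = (- snd d, fst d)"

definition crossing_normal :: "int \<times> int \<Rightarrow> int \<times> int \<Rightarrow> int \<times> int" where
  "crossing_normal d v = (if ip (perp d) v < 0 then perp d else (snd d, - fst d))"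

text \<open>Wall crossing modulo I^N: the k[M]-algebra automorphism x^m |-> x^m f^<n,m>.\<close>
definition wall_cross :: "nat \<Rightarrow> nat \<Rightarrow> nat \<Rightarrow> 'k::field ser \<Rightarrow> int \<times> int \<Rightarrow> 'k ser \<Rightarrow> 'k ser" where
  "wall_cross l1 l2 N f n u = ser_trunc l1 l2 N (\<lambda>\<alpha> m.
      \<Sum>\<beta>\<in>below \<alpha>. \<Sum>m1\<in>{m1. u \<beta> m1 \<noteq> 0}.
        u \<beta> m1 * ser_ipow l1 l2 N f (ip n m1) (mdiff \<alpha> \<beta>) (fst m - fst m1, snd m - snd m1))"

section \<open>The diagram Scat(P_1,P_2)\<close>

definition P1 :: "nat \<Rightarrow> 'k::field ser" where
  "P1 l1 = (\<lambda>\<alpha> m. if \<alpha> = zero_mono \<and> m = (0,0) then 1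
      else if (\<exists>j. 1 \<le> j \<and> j \<le> l1 \<and> \<alpha> = var_mono (1,j) \<and> m = (int j, 0)) then 1 else 0)"

definition P2 :: "nat \<Rightarrow> 'k::field ser" where
  "P2 l2 = (\<lambda>\<alpha> m. if \<alpha> = zero_mono \<and> m = (0,0) then 1
      else if (\<exists>j. 1 \<le> j \<and> j \<le> l2 \<and> \<alpha> = var_mono (2,j) \<and> m = (0, int j)) then 1 else 0)"

definition is_wall_fn :: "nat \<Rightarrow> nat \<Rightarrow> int \<times> int \<Rightarrow> 'k::field ser \<Rightarrow> bool" where
  "is_wall_fn l1 l2 d f \<longleftrightarrow> in_Rhat l1 l2 f \<and> f zero_mono (0,0) = 1 \<and>
     (\<forall>\<alpha> m. f \<alpha> m \<noteq> 0 \<longrightarrow> (\<alpha> = zero_mono \<and> m = (0,0)) \<or>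
        (\<alpha> \<noteq> zero_mono \<and> (\<exists>j::nat. 1 \<le> j \<and> m = (int j * fst d, int j * snd d))))"

text \<open>Ray directions: the rays are R_{<=0}(a,b), (a,b) coprime positive.\<close>
definition ray_dirs :: "(int \<times> int) set" where
  "ray_dirs = {(a,b). 0 < a \<and> 0 < b \<and> coprime a b}"

definition nontriv_rays :: "nat \<Rightarrow> nat \<Rightarrow> nat \<Rightarrow> (int \<times> int \<Rightarrow> 'k::field ser) \<Rightarrow> (int \<times> int) set" where
  "nontriv_rays l1 l2 N F = {d \<in> ray_dirs. ser_trunc l1 l2 N (F d) \<noteq> ser_trunc l1 l2 N ser_one}"

definition slope :: "int \<times> int \<Rightarrow> rat" where
  "slope d = of_int (snd d) / of_int (fst d)"

definition dir_of_slope :: "rat \<Rightarrow> int \<times> int" where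
  "dir_of_slope q = (snd (quotient_of q), fst (quotient_of q))"

text \<open>Rays nontrivial mod I^N, in increasing order of slope b/a, i.e. in counterclockwise
  order of the rays R_{<=0}(a,b) in the third quadrant.\<close>
definition sorted_rays :: "nat \<Rightarrow> nat \<Rightarrow> nat \<Rightarrow> (int \<times> int \<Rightarrow> 'k::field ser) \<Rightarrow> (int \<times> int) list" where
  "sorted_rays l1 l2 N F = map dir_of_slope (sorted_list_of_set (slope ` nontriv_rays l1 l2 N F))"

text \<open>The walls crossed (modulo I^N) by a counterclockwise loop around the origin starting in the
  open first quadrant, as (direction, velocity at crossing, function):
  positive y-axis, negative x-axis, rays in the third quadrant, negative y-axis, positive x-axis.\<close>
definition loop_walls :: "nat \<Rightarrow> nat \<Rightarrow> nat \<Rightarrow> (int \<times> int \<Rightarrow> 'k::field ser)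
     \<Rightarrow> ((int \<times> int) \<times> (int \<times> int) \<times> 'k ser) list" where
  "loop_walls l1 l2 N F =
     [((0,1), (-1,0), P2 l2), ((1,0), (0,-1), P1 l1)]
     @ map (\<lambda>d. (d, (snd d, - fst d), F d)) (sorted_rays l1 l2 N F)
     @ [((0,1), (1,0), P2 l2), ((1,0), (0,1), P1 l1)]"

text \<open>Path-ordered product modulo I^N (first crossed wall applied first).\<close>
definition path_product :: "nat \<Rightarrow> nat \<Rightarrow> nat \<Rightarrow> (int \<times> int \<Rightarrow> 'k::field ser) \<Rightarrow> 'k ser \<Rightarrow> 'k ser" where
  "path_product l1 l2 N F =
     fold (\<lambda>(d, v, f) acc. wall_cross l1 l2 N f (crossing_normal d v) \<circ> acc) (loop_walls l1 l2 N F) id"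

text \<open>F describes the ray functions of a consistent scattering diagram consisting of the lines
  (R e_1, P_1), (R e_2, P_2) and the rays (R_{<=0}(a,b), F(a,b)). By uniqueness, this pins down
  Scat(P_1,P_2).\<close>
definition scat_consistent :: "nat \<Rightarrow> nat \<Rightarrow> (int \<times> int \<Rightarrow> 'k::field ser) \<Rightarrow> bool" where
  "scat_consistent l1 l2 F \<longleftrightarrow>
     (\<forall>d\<in>ray_dirs. is_wall_fn l1 l2 d (F d)) \<and>
     (\<forall>N. finite (nontriv_rays l1 l2 N F) \<and>
          (\<forall>u. in_RN l1 l2 N u \<longrightarrow> path_product l1 l2 N F u = u))"

text \<open>Walls of Scat(P_1,P_2): (support, primitive direction, function).\<close>
definition scat_walls :: "nat \<Rightarrow> nat \<Rightarrow> (int \<times> int \<Rightarrow> 'k::field ser)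
     \<Rightarrow> ((real \<times> real) set \<times> (int \<times> int) \<times> 'k ser) set" where
  "scat_walls l1 l2 F =
     {({(x, 0) | x::real. True}, (1,0), P1 l1), ({(0, y) | y::real. True}, (0,1), P2 l2)}
     \<union> {({(- (t * of_int (fst d)), - (t * of_int (snd d))) | t::real. 0 \<le> t}, d, F d) | d. d \<in> ray_dirs}"

section \<open>Broken lines\<close>

definition pser_one :: "'k::field pser" where
  "pser_one = (\<lambda>\<alpha>. if \<alpha> = zero_mono then 1 else 0)"

definition mono_ser :: "'k::field pser \<Rightarrow> int \<times> int \<Rightarrow> 'k ser" where
  "mono_ser c m = (\<lambda>\<alpha> m'. if m' = m then c \<alpha> else 0)"

text \<open>Length of the part of the i-th linear piece (breakpoints taus, then 0) lying in [t,0].\<close>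
definition seglen :: "real list \<Rightarrow> real \<Rightarrow> nat \<Rightarrow> real" where
  "seglen taus t i = (let bks = taus @ [0];
      lo = (if i = 0 then t else max t (bks ! (i - 1))) in max 0 (bks ! i - lo))"

text \<open>beta(t) for t <= 0: beta(0) = Q and derivative -m_i on the i-th piece.\<close>
definition bl_pos :: "real \<times> real \<Rightarrow> real list \<Rightarrow> (int \<times> int) list \<Rightarrow> real \<Rightarrow> real \<times> real" where
  "bl_pos Q taus ms t =
     (fst Q + (\<Sum>i<length ms. seglen taus t i * of_int (fst (ms ! i))),
      snd Q + (\<Sum>i<length ms. seglen taus t i * of_int (snd (ms ! i))))"

text \<open>Bending at P from c x^m to c' x^{m'}: P lies on a wall (S,d,f), crossing is transversal,
  and c' x^{m'} is a term, other than c x^m, of c x^m f^{<n,m>}, n = +-perp d with <n,m> > 0.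
  (Walls meet only at the origin, which broken lines avoid, so at most one wall contains P.)\<close>
definition bend_ok :: "nat \<Rightarrow> nat \<Rightarrow> (int \<times> int \<Rightarrow> 'k::field ser) \<Rightarrow> real \<times> real
     \<Rightarrow> int \<times> int \<Rightarrow> 'k pser \<Rightarrow> int \<times> int \<Rightarrow> 'k pser \<Rightarrow> bool" where
  "bend_ok l1 l2 F P m c m' c' \<longleftrightarrow>
     (\<exists>S d f. (S, d, f) \<in> scat_walls l1 l2 F \<and> P \<in> S \<and> ip (perp d) m \<noteq> 0 \<and> m' \<noteq> m \<and>
        c' = (\<lambda>\<alpha>. ser_mul (mono_ser c m) (ser_pow f (nat \<bar>ip (perp d) m\<bar>)) \<alpha> m') \<and>
        c' \<noteq> (\<lambda>_. 0))"

text \<open>A broken line for m0 with endpoint Q, breakpoints taus, exponents ms = [m_0,...,m_l] and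
  coefficients cs = [c_0,...,c_l].\<close>
definition broken_line :: "nat \<Rightarrow> nat \<Rightarrow> (int \<times> int \<Rightarrow> 'k::field ser) \<Rightarrow> int \<times> int
     \<Rightarrow> real \<times> real \<Rightarrow> real list \<Rightarrow> (int \<times> int) list \<Rightarrow> 'k pser list \<Rightarrow> bool" where
  "broken_line l1 l2 F m0 Q taus ms cs \<longleftrightarrow>
     m0 \<noteq> (0,0) \<and> length ms = Suc (length taus) \<and> length cs = length ms \<and>
     sorted_wrt (<) taus \<and> (\<forall>\<tau>\<in>set taus. \<tau> < 0) \<and>
     ms ! 0 = m0 \<and> cs ! 0 = pser_one \<and>
     (\<forall>t\<le>0. bl_pos Q taus ms t \<noteq> (0,0)) \<and>
     (\<forall>i. 0 < i \<and> i \<le> length taus \<longrightarrow>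
        bend_ok l1 l2 F (bl_pos Q taus ms (taus ! (i - 1))) (ms ! (i - 1)) (cs ! (i - 1)) (ms ! i) (cs ! i))"

definition on_pos_axes :: "real \<times> real \<Rightarrow> bool" where
  "on_pos_axes P \<longleftrightarrow> (snd P = 0 \<and> fst P > 0) \<or> (fst P = 0 \<and> snd P > 0)"

text \<open>One-bending property for (d1,d2) and (ka,kb) (the side conditions coprime (a,b),
  d1 b - d2 a ~= 0, k >= 1 are imposed where the property is used).\<close>
definition one_bending :: "nat \<Rightarrow> nat \<Rightarrow> (int \<times> int \<Rightarrow> 'k::field ser)
     \<Rightarrow> nat \<Rightarrow> nat \<Rightarrow> nat \<Rightarrow> nat \<Rightarrow> nat \<Rightarrow> bool" where
  "one_bending l1 l2 F d1 d2 a b k \<longleftrightarrow>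
     (\<forall>Q taus ms cs.
        broken_line l1 l2 F (- int d1, - int d2) Q taus ms cs \<and>
        last ms = (int k * int a - int d1, int k * int b - int d2) \<and>
        (\<forall>\<tau>\<in>set taus. \<not> on_pos_axes (bl_pos Q taus ms \<tau>))
        \<longrightarrow> length taus = 1)"

end

theory Submission
  imports Defs
begin

text \<open>
  Away from the positive axes every wall of the diagram lies on a ray through the origin in the
  closed third quadrant, so at each bend the exponent grows by a positive multiple \<open>j\<^sub>c w\<^sub>c\<close>
  of a direction \<open>w\<^sub>c\<close> of the closed first quadrant, and the bend point is a negative multiple
  of \<open>w\<^sub>c\<close>. The angular momentum \<open>\<beta>(t) \<times> m(t)\<close> of a broken line is constant: it does not
  change along a linear piece, nor at a bend, where the exponent moves parallel to the position.
  Hence the directions \<open>w\<^sub>0, w\<^sub>1, ...\<close> all turn the same way, the way \<open>w\<^sub>0\<close> turns from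
  \<open>D = (d\<^sub>1, d\<^sub>2)\<close>. If there were two or more bends, then \<open>k(a, b) = \<Sum> j\<^sub>c w\<^sub>c\<close> would
  make \<open>j\<^sub>0 w\<^sub>0\<close> a lattice vector strictly between \<open>D\<close> and \<open>(a, b)\<close>, not exceeding \<open>k(a, b)\<close>;
  the identity \<open>b (D \<times> p) = p\<^sub>2 (D \<times> (a, b)) - d\<^sub>2 (p \<times> (a, b))\<close> shows that such a \<open>p\<close> forces
  \<open>d\<^sub>2 < k b |D \<times> (a, b)|\<close> (or, mirrored, \<open>d\<^sub>1 < k a |D \<times> (a, b)|\<close>). The pairs of part (1) are
  instances of this criterion, and part (3) follows from Bezout's identity.
\<close>

section \<open>Cross products of lattice vectors\<close>

definition cross :: "'a::comm_ring \<times> 'a \<Rightarrow> 'a \<times> 'a \<Rightarrow> 'a" where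
  "cross u v = fst u * snd v - snd u * fst v"

definition in_quadrant :: "'a::linordered_idom \<times> 'a \<Rightarrow> bool" where
  "in_quadrant v \<longleftrightarrow> 0 \<le> fst v \<and> 0 \<le> snd v \<and> v \<noteq> (0, 0)"

lemma cross_swap: "cross (prod.swap u) (prod.swap v) = - cross u v"
  by (simp add: cross_def)

lemma in_quadrant_swap: "in_quadrant (prod.swap v) \<longleftrightarrow> in_quadrant v"
  by (auto simp: in_quadrant_def prod_eq_iff)

lemma cross_sum_right:
  fixes w :: "'b \<Rightarrow> 'a::comm_ring \<times> 'a"
  shows "cross u (\<Sum>c\<in>A. j c * fst (w c), \<Sum>c\<in>A. j c * snd (w c)) = (\<Sum>c\<in>A. j c * cross u (w c))"
  by (simp add: cross_def sum_distrib_left sum_subtractf[symmetric] algebra_simps)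

lemma cross_pos_trans:
  fixes u v w :: "'a::linordered_idom \<times> 'a"
  assumes "in_quadrant u" "in_quadrant v" "in_quadrant w"
    and uv: "0 < cross u v" and vw: "0 < cross v w"
  shows "0 < cross u w"
proof -
  have "cross u w * (fst v + snd v) = cross u v * (fst w + snd w) + cross v w * (fst u + snd u)"
    by (simp add: cross_def algebra_simps)
  moreover have "0 < fst u + snd u" "0 < fst w + snd w" "0 \<le> fst v + snd v"
    using assms(1-3) by (auto simp: in_quadrant_def prod_eq_iff)
  ultimately have "0 < cross u w * (fst v + snd v)"
    using uv vw by (simp add: add_pos_pos)
  with \<open>0 \<le> fst v + snd v\<close> show ?thesis
    by (simp add: zero_less_mult_iff)
qed

lemma cross_pos_chain:
  fixes w :: "nat \<Rightarrow> 'a::linordered_idom \<times> 'a"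
  assumes quadrant: "\<And>c. c < n \<Longrightarrow> in_quadrant (w c)"
    and turn: "\<And>c. Suc c < n \<Longrightarrow> 0 < cross (w c) (w (Suc c))"
    and "i < l" "l < n"
  shows "0 < cross (w i) (w l)"
  using assms(3,4)
proof (induction l)
  case 0
  then show ?case by simp
next
  case (Suc l)
  show ?case
  proof (cases "i = l")
    case True
    with Suc.prems turn show ?thesis by simp
  next
    case False
    with Suc have "0 < cross (w i) (w l)" by simp
    with Suc.prems turn[of l] quadrant show ?thesis
      by (metis cross_pos_trans Suc_lessD order.strict_trans)
  qed
qed

lemma cross_between_bound:
  fixes D p V :: "int \<times> int" and k :: int
  assumes "0 \<le> snd D" "0 < snd V" "0 \<le> snd p" "snd p \<le> k * snd V"
    and "0 < cross D p" "0 < cross p V" "0 < cross D V"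
  shows "snd D < cross D V * k * snd V"
proof -
  have "snd V * cross D p = snd p * cross D V - snd D * cross p V"
    by (simp add: cross_def algebra_simps)
  moreover have "0 < snd V * cross D p"
    using assms by simp
  ultimately have "snd D * cross p V < snd p * cross D V"
    by linarith
  also have "\<dots> \<le> k * snd V * cross D V"
    using assms by (simp add: mult_right_mono)
  finally have "snd D * cross p V < cross D V * k * snd V"
    by (simp add: algebra_simps)
  moreover have "snd D \<le> snd D * cross p V"
    using assms by (simp add: mult_le_cancel_left1)
  ultimately show ?thesis by simp
qed

lemma cross_pos_if_sum:
  fixes V :: "int \<times> int" and w :: "nat \<Rightarrow> int \<times> int" and j :: "nat \<Rightarrow> int" and k :: int
  assumes sum: "(\<Sum>c<n. j c * fst (w c)) = k * fst V" "(\<Sum>c<n. j c * snd (w c)) = k * snd V"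
    and k: "0 < k"
    and nonneg: "\<And>c. c < n \<Longrightarrow> 0 \<le> j c * cross u (w c)"
    and pos: "i < n" "0 < j i * cross u (w i)"
  shows "0 < cross u V"
proof -
  have "k * cross u V = (\<Sum>c<n. j c * cross u (w c))"
    using cross_sum_right[of u j w "{..<n}"] sum by (simp add: cross_def algebra_simps)
  also have "0 < \<dots>"
    using nonneg pos by (intro sum_pos2[of _ i]) auto
  finally show ?thesis
    using k by (simp add: zero_less_mult_iff)
qed

lemma ccw_decomposition_bound:
  fixes D V :: "int \<times> int" and w :: "nat \<Rightarrow> int \<times> int" and j :: "nat \<Rightarrow> int" and k :: int
  assumes n: "2 \<le> n"
    and w: "\<And>c. c < n \<Longrightarrow> in_quadrant (w c)" and j: "\<And>c. c < n \<Longrightarrow> 1 \<le> j c"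
    and D: "in_quadrant D" and V: "0 \<le> fst V" "0 \<le> snd V" and k: "0 < k"
    and first: "0 < cross D (w 0)"
    and turn: "\<And>c. Suc c < n \<Longrightarrow> 0 < cross (w c) (w (Suc c))"
    and sum: "(\<Sum>c<n. j c * fst (w c)) = k * fst V" "(\<Sum>c<n. j c * snd (w c)) = k * snd V"
  shows "0 < cross D V \<and> snd D < cross D V * k * snd V"
proof -
  have j_pos: "0 < j c" if "c < n" for c
    using j[OF that] by simp
  have D_w: "0 < cross D (w c)" if "c < n" for c
    using cross_pos_chain[of "Suc n" "case_nat D w" 0 "Suc c"] that first turn w D
    by (auto split: nat.split)
  have w0_w: "0 < cross (w 0) (w c)" if "0 < c" "c < n" for c
    using cross_pos_chain[of n w 0 c] that turn w by blast
  have DV: "0 < cross D V"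
    using n j_pos D_w by (intro cross_pos_if_sum[OF sum k, where i = 0]) (auto intro: less_imp_le)
  have w0V: "0 < cross (w 0) V"
  proof (rule cross_pos_if_sum[OF sum k, where i = 1])
    show "0 \<le> j c * cross (w 0) (w c)" if "c < n" for c
      using that j_pos[of c] w0_w[of c] by (cases "c = 0") (auto simp: cross_def)
  qed (use n j_pos w0_w in auto)
  txt \<open>The first summand lies strictly between \<open>D\<close> and \<open>V\<close> and below \<open>k V\<close>.\<close>
  define p where "p = (j 0 * fst (w 0), j 0 * snd (w 0))"
  have "snd p \<le> k * snd V"
    unfolding p_def sum(2)[symmetric] using n j_pos w
    by (auto simp: in_quadrant_def less_imp_le
        intro!: member_le_sum[where f = "\<lambda>c. j c * snd (w c)"])
  moreover have "0 < snd V"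
    using DV V D by (cases "snd V = 0") (auto simp: cross_def in_quadrant_def mult_less_0_iff)
  moreover have "0 < cross D p" "0 < cross p V" "0 \<le> snd p"
    using n j[of 0] w[of 0] D_w[of 0] w0V
    by (auto simp: p_def cross_def in_quadrant_def algebra_simps)
  ultimately show ?thesis
    using cross_between_bound[of D V p k] DV D by (auto simp: in_quadrant_def)
qed

lemma cw_decomposition_bound:
  fixes D V :: "int \<times> int" and w :: "nat \<Rightarrow> int \<times> int" and j :: "nat \<Rightarrow> int" and k :: int
  assumes "2 \<le> n"
    and "\<And>c. c < n \<Longrightarrow> in_quadrant (w c)" and "\<And>c. c < n \<Longrightarrow> 1 \<le> j c"
    and "in_quadrant D" and "0 \<le> fst V" "0 \<le> snd V" and "0 < k"
    and "cross D (w 0) < 0"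
    and "\<And>c. Suc c < n \<Longrightarrow> cross (w c) (w (Suc c)) < 0"
    and "(\<Sum>c<n. j c * fst (w c)) = k * fst V" "(\<Sum>c<n. j c * snd (w c)) = k * snd V"
  shows "cross D V < 0 \<and> fst D < - cross D V * k * fst V"
  using ccw_decomposition_bound[of n "prod.swap \<circ> w" j "prod.swap D" "prod.swap V" k] assms
  by (simp add: cross_swap in_quadrant_swap)

section \<open>Bends\<close>

definition ray_supported :: "int \<times> int \<Rightarrow> 'k::field ser \<Rightarrow> bool" where
  "ray_supported d g \<longleftrightarrow> (\<forall>\<alpha> m. g \<alpha> m \<noteq> 0 \<longrightarrow> (\<exists>j::nat. m = (int j * fst d, int j * snd d)))"

lemma ser_mul_nonzero_factors:
  assumes "ser_mul u v \<alpha> m \<noteq> 0"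
  obtains \<beta> m1 where "u \<beta> m1 \<noteq> 0" "v (mdiff \<alpha> \<beta>) (fst m - fst m1, snd m - snd m1) \<noteq> 0"
proof -
  from assms obtain \<beta> where "(\<Sum>m1\<in>{m1. u \<beta> m1 \<noteq> 0}.
      u \<beta> m1 * v (mdiff \<alpha> \<beta>) (fst m - fst m1, snd m - snd m1)) \<noteq> 0"
    unfolding ser_mul_def by (meson sum.not_neutral_contains_not_neutral)
  then obtain m1 where "u \<beta> m1 * v (mdiff \<alpha> \<beta>) (fst m - fst m1, snd m - snd m1) \<noteq> 0"
    by (meson sum.not_neutral_contains_not_neutral)
  then show ?thesis
    by (auto intro: that)
qed

lemma ray_supported_one: "ray_supported d ser_one"
  unfolding ray_supported_def ser_one_def by (auto intro: exI[of _ 0])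

lemma ray_supported_mul:
  assumes u: "ray_supported d u" and v: "ray_supported d v"
  shows "ray_supported d (ser_mul u v)"
  unfolding ray_supported_def
proof (intro allI impI)
  fix \<alpha> m
  assume "ser_mul u v \<alpha> m \<noteq> 0"
  then obtain \<beta> m1 where "u \<beta> m1 \<noteq> 0" "v (mdiff \<alpha> \<beta>) (fst m - fst m1, snd m - snd m1) \<noteq> 0"
    by (rule ser_mul_nonzero_factors)
  then obtain j1 j2 :: nat where "m1 = (int j1 * fst d, int j1 * snd d)"
    and "(fst m - fst m1, snd m - snd m1) = (int j2 * fst d, int j2 * snd d)"
    using u v unfolding ray_supported_def by blast
  then have "m = (int (j1 + j2) * fst d, int (j1 + j2) * snd d)"
    by (auto simp: algebra_simps prod_eq_iff)
  then show "\<exists>j::nat. m = (int j * fst d, int j * snd d)" ..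
qed

lemma ray_supported_pow: "ray_supported d u \<Longrightarrow> ray_supported d (ser_pow u n)"
  by (induction n) (simp_all add: ray_supported_one ray_supported_mul)

lemma ray_supported_P1: "ray_supported (1, 0) (P1 l1)"
  unfolding ray_supported_def P1_def by (auto intro: exI[of _ 0])

lemma ray_supported_P2: "ray_supported (0, 1) (P2 l2)"
  unfolding ray_supported_def P2_def by (auto intro: exI[of _ 0])

lemma ray_supported_wall_fn: "is_wall_fn l1 l2 d f \<Longrightarrow> ray_supported d f"
  unfolding ray_supported_def is_wall_fn_def by (metis of_nat_0 mult_zero_left)

lemma scat_wall_point:
  fixes F :: "int \<times> int \<Rightarrow> 'k::field ser"
  assumes wall: "(S, d, f) \<in> scat_walls l1 l2 F" and "P \<in> S"
    and "P \<noteq> (0, 0)" and "\<not> on_pos_axes P"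
    and wf: "\<forall>d\<in>ray_dirs. is_wall_fn l1 l2 d (F d)"
  shows "in_quadrant d \<and> ray_supported d f
    \<and> (\<exists>s>0. P = (- (s * of_int (fst d)), - (s * of_int (snd d))))"
  using wall unfolding scat_walls_def
proof (elim UnE insertE CollectE exE conjE)
  assume "(S, d, f) = ({(x, 0) | x::real. True}, (1, 0), P1 l1)"
  moreover from this obtain x where "P = (x, 0)"
    using \<open>P \<in> S\<close> by auto
  moreover from this have "x < 0"
    using assms(3,4) by (auto simp: on_pos_axes_def)
  ultimately show ?thesis
    by (auto simp: in_quadrant_def ray_supported_P1 intro!: exI[of _ "- x"])
next
  assume "(S, d, f) = ({(0, y) | y::real. True}, (0, 1), P2 l2)"
  moreover from this obtain y where "P = (0, y)"
    using \<open>P \<in> S\<close> by auto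
  moreover from this have "y < 0"
    using assms(3,4) by (auto simp: on_pos_axes_def)
  ultimately show ?thesis
    by (auto simp: in_quadrant_def ray_supported_P2 intro!: exI[of _ "- y"])
next
  fix d'
  assume "(S, d, f) =
    ({(- (t * of_int (fst d')), - (t * of_int (snd d'))) | t::real. 0 \<le> t}, d', F d')"
    and "d' \<in> ray_dirs"
  moreover from this obtain t :: real
    where "0 \<le> t" "P = (- (t * of_int (fst d)), - (t * of_int (snd d)))"
    using \<open>P \<in> S\<close> by auto
  moreover from this have "t \<noteq> 0"
    using \<open>P \<noteq> (0, 0)\<close> by auto
  ultimately show ?thesis
    using wf ray_supported_wall_fn by (fastforce simp: ray_dirs_def in_quadrant_def)
qed simp

definition wall_bend :: "real \<times> real \<Rightarrow> int \<times> int \<Rightarrow> int \<times> int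
    \<Rightarrow> int \<times> int \<Rightarrow> real \<Rightarrow> int \<Rightarrow> bool" where
  "wall_bend P m m' w s j \<longleftrightarrow> in_quadrant w \<and> 0 < s
     \<and> P = (- (s * of_int (fst w)), - (s * of_int (snd w)))
     \<and> 1 \<le> j \<and> m' = (fst m + j * fst w, snd m + j * snd w) \<and> cross w m \<noteq> 0"

lemma bend_ok_data:
  fixes F :: "int \<times> int \<Rightarrow> 'k::field ser"
  assumes bend: "bend_ok l1 l2 F P m c m' c'" and wf: "\<forall>d\<in>ray_dirs. is_wall_fn l1 l2 d (F d)"
    and "P \<noteq> (0, 0)" and "\<not> on_pos_axes P"
  shows "\<exists>w s j. wall_bend P m m' w s j"
proof -
  obtain S d f where "(S, d, f) \<in> scat_walls l1 l2 F" "P \<in> S" and transversal: "ip (perp d) m \<noteq> 0"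
    and "m' \<noteq> m" and c': "c' = (\<lambda>\<alpha>. ser_mul (mono_ser c m) (ser_pow f (nat \<bar>ip (perp d) m\<bar>)) \<alpha> m')"
    and "c' \<noteq> (\<lambda>_. 0)"
    using bend unfolding bend_ok_def by blast
  then have d: "in_quadrant d \<and> ray_supported d f
      \<and> (\<exists>s>0. P = (- (s * of_int (fst d)), - (s * of_int (snd d))))"
    using scat_wall_point assms(2-4) by blast
  obtain \<alpha> where "ser_mul (mono_ser c m) (ser_pow f (nat \<bar>ip (perp d) m\<bar>)) \<alpha> m' \<noteq> 0"
    using c' \<open>c' \<noteq> (\<lambda>_. 0)\<close> by auto
  then obtain \<beta> m1 where "mono_ser c m \<beta> m1 \<noteq> 0"
    and "ser_pow f (nat \<bar>ip (perp d) m\<bar>) (mdiff \<alpha> \<beta>) (fst m' - fst m1, snd m' - snd m1) \<noteq> 0"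
    by (rule ser_mul_nonzero_factors)
  moreover have "ray_supported d (ser_pow f (nat \<bar>ip (perp d) m\<bar>))"
    using d ray_supported_pow by blast
  ultimately obtain j :: nat
    where j: "(fst m' - fst m, snd m' - snd m) = (int j * fst d, int j * snd d)"
    unfolding ray_supported_def mono_ser_def by (auto split: if_splits)
  with \<open>m' \<noteq> m\<close> have "1 \<le> int j"
    by (cases "j = 0") (auto simp: prod_eq_iff)
  moreover have "cross d m \<noteq> 0"
    using transversal by (simp add: ip_def perp_def cross_def algebra_simps)
  moreover obtain s where "0 < s" "P = (- (s * of_int (fst d)), - (s * of_int (snd d)))"
    using d by blast
  ultimately show ?thesis
    using d j unfolding wall_bend_def
    by (intro exI[where x = d] exI[where x = s] exI[where x = "int j"]) (auto simp: prod_eq_iff)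
qed

lemma broken_line_bend_directions:
  fixes F :: "int \<times> int \<Rightarrow> 'k::field ser"
  assumes bl: "broken_line l1 l2 F m0 Q taus ms cs"
    and wf: "\<forall>d\<in>ray_dirs. is_wall_fn l1 l2 d (F d)"
    and off_axes: "\<forall>\<tau>\<in>set taus. \<not> on_pos_axes (bl_pos Q taus ms \<tau>)"
  obtains w s j where
    "\<And>c. c < length taus \<Longrightarrow>
      wall_bend (bl_pos Q taus ms (taus ! c)) (ms ! c) (ms ! Suc c) (w c) (s c) (j c)"
proof -
  have "\<exists>w s j. wall_bend (bl_pos Q taus ms (taus ! c)) (ms ! c) (ms ! Suc c) w s j"
    if c: "c < length taus" for c
  proof (rule bend_ok_data[OF _ wf])
    show "bend_ok l1 l2 F (bl_pos Q taus ms (taus ! c)) (ms ! c) (cs ! c) (ms ! Suc c) (cs ! Suc c)"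
      using bl c unfolding broken_line_def by (metis Suc_leI diff_Suc_1 zero_less_Suc)
    have "taus ! c \<in> set taus"
      using c by simp
    then show "bl_pos Q taus ms (taus ! c) \<noteq> (0, 0)" "\<not> on_pos_axes (bl_pos Q taus ms (taus ! c))"
      using bl off_axes unfolding broken_line_def by (auto simp: less_imp_le)
  qed
  then show ?thesis
    using that by metis
qed

section \<open>Angular momentum of a broken line\<close>

text \<open>
  \<open>P c\<close> is the \<open>c\<close>-th bend point and \<open>m c\<close> the exponent of the piece arriving there;
  \<open>cross (P c) (m c)\<close> is the conserved angular momentum of the broken line.
\<close>
lemma cross_consecutive_bends:
  fixes P m :: "nat \<Rightarrow> 'a::linordered_field \<times> 'a"
  assumes piece: "\<And>c. Suc c < n \<Longrightarrow> \<exists>\<Delta>>0. P c =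
      (fst (P (Suc c)) + \<Delta> * fst (m (Suc c)), snd (P (Suc c)) + \<Delta> * snd (m (Suc c)))"
    and bend: "\<And>c. c < n \<Longrightarrow> cross (P c) (m (Suc c)) = cross (P c) (m c)"
    and c: "Suc c < n"
  shows "sgn (cross (P c) (P (Suc c))) = - sgn (cross (P 0) (m 0))"
proof -
  have along_piece: "cross (P (Suc c)) (m (Suc c)) = cross (P c) (m (Suc c))" if "Suc c < n" for c
    using piece[OF that] by (auto simp: cross_def algebra_simps)
  have conserved: "cross (P c) (m c) = cross (P 0) (m 0)" if "c < n" for c
    using that by (induction c) (simp_all add: along_piece bend)
  obtain \<Delta> where "0 < \<Delta>" and P_c:
    "P c = (fst (P (Suc c)) + \<Delta> * fst (m (Suc c)), snd (P (Suc c)) + \<Delta> * snd (m (Suc c)))"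
    using piece[OF c] by blast
  have "cross (P c) (P (Suc c)) = - \<Delta> * cross (P (Suc c)) (m (Suc c))"
    by (subst P_c) (simp add: cross_def algebra_simps)
  also have "\<dots> = - \<Delta> * cross (P 0) (m 0)"
    using conserved[OF c] by simp
  finally show ?thesis
    using \<open>0 < \<Delta>\<close> by (simp add: sgn_mult)
qed

lemma seglen_within_piece:
  assumes s: "sorted_wrt (<) (taus @ [0::real])"
    and i': "i' < Suc (length taus)" and i: "i < Suc (length taus)"
    and t12: "t1 \<le> t2" and lo: "i = 0 \<or> (taus @ [0]) ! (i - 1) \<le> t1"
    and hi: "t2 \<le> (taus @ [0]) ! i"
  shows "seglen taus t1 i' = seglen taus t2 i' + (if i' = i then t2 - t1 else 0)"
proof -
  define bks where "bks = taus @ [0::real]"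
  have mono: "bks ! x \<le> bks ! y" if "x \<le> y" "y < Suc (length taus)" for x y
    using s that sorted_wrt_nth_less[of "(<)" bks x y] unfolding bks_def
    by (cases "x = y") auto
  have sg: "seglen taus t j = max 0 (bks ! j - (if j = 0 then t else max t (bks ! (j - 1))))"
    for t j
    by (simp add: seglen_def bks_def Let_def)
  consider "i' < i" | "i' = i" | "i < i'" by linarith
  then show ?thesis
  proof cases
    case 1
    then have "bks ! i' \<le> bks ! (i - 1)"
      using mono i by simp
    also have "\<dots> \<le> t1"
      using 1 lo by (simp add: bks_def)
    finally have "bks ! i' \<le> t1" .
    with 1 t12 show ?thesis by (cases "i' = 0") (simp_all add: sg)
  next
    case 2
    then show ?thesis using lo hi t12 by (auto simp: sg bks_def)
  next
    case 3
    then have "bks ! i \<le> bks ! (i' - 1)" using mono i' by simp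
    with 3 t12 hi show ?thesis by (simp add: sg bks_def)
  qed
qed

lemma bl_pos_within_piece:
  assumes s: "sorted_wrt (<) (taus @ [0::real])" and len: "length ms = Suc (length taus)"
    and i: "i < Suc (length taus)"
    and t12: "t1 \<le> t2" and lo: "i = 0 \<or> (taus @ [0]) ! (i - 1) \<le> t1"
    and hi: "t2 \<le> (taus @ [0]) ! i"
  shows "bl_pos Q taus ms t1 = (fst (bl_pos Q taus ms t2) + (t2 - t1) * of_int (fst (ms ! i)),
                               snd (bl_pos Q taus ms t2) + (t2 - t1) * of_int (snd (ms ! i)))"
proof -
  have "(\<Sum>j<length ms. seglen taus t1 j * of_int (g (ms ! j))) =
        (\<Sum>j<length ms. seglen taus t2 j * of_int (g (ms ! j))) + (t2 - t1) * of_int (g (ms ! i))"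
    for g :: "int \<times> int \<Rightarrow> int"
  proof -
    have "(\<Sum>j<length ms. seglen taus t1 j * of_int (g (ms ! j))) =
        (\<Sum>j<length ms. seglen taus t2 j * of_int (g (ms ! j))
           + (if j = i then (t2 - t1) * of_int (g (ms ! i)) else 0))"
      using seglen_within_piece[OF s _ i t12 lo hi] len
      by (intro sum.cong) (auto simp: algebra_simps)
    also have "\<dots> = (\<Sum>j<length ms. seglen taus t2 j * of_int (g (ms ! j)))
        + (t2 - t1) * of_int (g (ms ! i))"
      using i len by (simp add: sum.distrib)
    finally show ?thesis .
  qed
  then show ?thesis unfolding bl_pos_def by (simp add: algebra_simps)
qed

lemma bl_pos_consecutive_breakpoints:
  assumes bl: "broken_line l1 l2 F m0 Q taus ms cs" and c: "Suc c < length taus"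
  shows "\<exists>\<Delta>>0. bl_pos Q taus ms (taus ! c) =
    (fst (bl_pos Q taus ms (taus ! Suc c)) + \<Delta> * of_int (fst (ms ! Suc c)),
     snd (bl_pos Q taus ms (taus ! Suc c)) + \<Delta> * of_int (snd (ms ! Suc c)))"
proof -
  have sorted: "sorted_wrt (<) taus" and "\<forall>\<tau>\<in>set taus. \<tau> < 0"
    and len: "length ms = Suc (length taus)"
    using bl by (auto simp: broken_line_def)
  then have "sorted_wrt (<) (taus @ [0])"
    by (auto simp: sorted_wrt_append)
  moreover have "taus ! c < taus ! Suc c"
    using sorted c by (simp add: sorted_wrt_iff_nth_less)
  ultimately have "bl_pos Q taus ms (taus ! c) =
    (fst (bl_pos Q taus ms (taus ! Suc c)) + (taus ! Suc c - taus ! c) * of_int (fst (ms ! Suc c)),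
     snd (bl_pos Q taus ms (taus ! Suc c)) + (taus ! Suc c - taus ! c) * of_int (snd (ms ! Suc c)))"
    using bl_pos_within_piece[of taus ms "Suc c" "taus ! c" "taus ! Suc c" Q] len c
    by (auto simp: nth_append)
  with \<open>taus ! c < taus ! Suc c\<close> show ?thesis
    by (intro exI[of _ "taus ! Suc c - taus ! c"]) simp
qed

lemma sgn_of_int: "sgn (of_int x :: 'a::linordered_idom) = of_int (sgn x)"
  by (simp add: sgn_if)

lemma broken_line_bends_turn:
  assumes bl: "broken_line l1 l2 F m0 Q taus ms cs"
    and bends: "\<And>c. c < length taus \<Longrightarrow>
      wall_bend (bl_pos Q taus ms (taus ! c)) (ms ! c) (ms ! Suc c) (w c) (s c) (j c)"
    and c: "Suc c < length taus"
  shows "sgn (cross (w c) (w (Suc c))) = sgn (cross (w 0) m0)"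
proof -
  have nonempty: "0 < length taus"
    using c by linarith
  define P where "P c = bl_pos Q taus ms (taus ! c)" for c
  define M :: "nat \<Rightarrow> real \<times> real" where "M c = map_prod of_int of_int (ms ! c)" for c
  define W :: "nat \<Rightarrow> real \<times> real" where "W c = map_prod of_int of_int (w c)" for c
  have P: "P c = (- (s c * fst (W c)), - (s c * snd (W c)))" if "c < length taus" for c
    using bends[OF that] by (simp add: wall_bend_def P_def W_def map_prod_def split_def)
  have "sgn (cross (P c) (P (Suc c))) = - sgn (cross (P 0) (M 0))"
  proof (rule cross_consecutive_bends)
    show "\<exists>\<Delta>>0. P c =
        (fst (P (Suc c)) + \<Delta> * fst (M (Suc c)), snd (P (Suc c)) + \<Delta> * snd (M (Suc c)))"
      if "Suc c < length taus" for c
      using bl_pos_consecutive_breakpoints[OF bl that]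
      by (simp add: P_def M_def map_prod_def split_def)
    show "cross (P c) (M (Suc c)) = cross (P c) (M c)" if "c < length taus" for c
      using bends[OF that] P[OF that]
      by (simp add: wall_bend_def M_def W_def map_prod_def split_def cross_def algebra_simps)
  qed (fact c)
  moreover have "cross (P c) (P (Suc c)) = s c * s (Suc c) * of_int (cross (w c) (w (Suc c)))"
    using P[of c] P[of "Suc c"] c by (simp add: W_def cross_def algebra_simps)
  moreover have "cross (P 0) (M 0) = - s 0 * of_int (cross (w 0) m0)"
  proof -
    have "ms ! 0 = m0"
      using bl by (simp add: broken_line_def)
    then show ?thesis
      using P[OF nonempty] by (simp add: M_def W_def cross_def algebra_simps)
  qed
  moreover have "0 < s c" "0 < s (Suc c)" "0 < s 0"
    using bends c nonempty by (auto simp: wall_bend_def)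
  ultimately have "(of_int (sgn (cross (w c) (w (Suc c)))) :: real) = of_int (sgn (cross (w 0) m0))"
    by (simp add: sgn_mult sgn_of_int)
  then show ?thesis
    by (simp only: of_int_eq_iff)
qed

section \<open>The one-bending property\<close>

lemma broken_line_at_most_one_bend:
  fixes d1 d2 a b k :: nat
  assumes bl: "broken_line l1 l2 F (- int d1, - int d2) Q taus ms cs"
    and bends: "\<And>c. c < length taus \<Longrightarrow>
      wall_bend (bl_pos Q taus ms (taus ! c)) (ms ! c) (ms ! Suc c) (w c) (s c) (j c)"
    and sum: "(\<Sum>c<length taus. j c * fst (w c)) = int k * int a"
      "(\<Sum>c<length taus. j c * snd (w c)) = int k * int b"
    and k: "1 \<le> k"
    and cw: "cross (int d1, int d2) (int a, int b) < 0 \<Longrightarrow>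
      - cross (int d1, int d2) (int a, int b) * int k * int a \<le> int d1"
    and ccw: "0 < cross (int d1, int d2) (int a, int b) \<Longrightarrow>
      cross (int d1, int d2) (int a, int b) * int k * int b \<le> int d2"
  shows "length taus < 2"
proof (rule ccontr)
  assume "\<not> length taus < 2"
  then have n: "2 \<le> length taus"
    by simp
  define D where "D = (int d1, int d2)"
  define V where "V = (int a, int b)"
  have ms0: "ms ! 0 = (- int d1, - int d2)" and D: "in_quadrant D"
    using bl by (auto simp: broken_line_def D_def in_quadrant_def)
  note bend = bends[unfolded wall_bend_def]
  have turn: "sgn (cross (w c) (w (Suc c))) = sgn (cross D (w 0))" if "Suc c < length taus" for c
    using broken_line_bends_turn[OF bl bends that] by (auto simp: cross_def D_def algebra_simps)
  have "0 < length taus"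
    using n by linarith
  then have "cross D (w 0) \<noteq> 0"
    using bend ms0 by (force simp: D_def cross_def algebra_simps)
  moreover have "\<not> 0 < cross D (w 0)"
    using ccw_decomposition_bound[of "length taus" w j D V "int k"] n bend D sum turn k ccw
    by (auto simp: V_def D_def sgn_1_pos)
  moreover have "\<not> cross D (w 0) < 0"
    using cw_decomposition_bound[of "length taus" w j D V "int k"] n bend D sum turn k cw
    by (auto simp: V_def D_def sgn_1_neg)
  ultimately show False
    by linarith
qed

lemma one_bending_if_cross_bounded:
  fixes F :: "int \<times> int \<Rightarrow> 'k::field ser" and l1 l2 a b k d1 d2 :: nat
  assumes wf: "\<forall>d\<in>ray_dirs. is_wall_fn l1 l2 d (F d)" and ab: "a \<noteq> 0 \<or> b \<noteq> 0" and k: "1 \<le> k"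
    and cw: "cross (int d1, int d2) (int a, int b) < 0 \<Longrightarrow>
      - cross (int d1, int d2) (int a, int b) * int k * int a \<le> int d1"
    and ccw: "0 < cross (int d1, int d2) (int a, int b) \<Longrightarrow>
      cross (int d1, int d2) (int a, int b) * int k * int b \<le> int d2"
  shows "one_bending l1 l2 F d1 d2 a b k"
  unfolding one_bending_def
proof (intro allI impI, elim conjE)
  fix Q taus ms cs
  assume bl: "broken_line l1 l2 F (- int d1, - int d2) Q taus ms cs"
    and last: "last ms = (int k * int a - int d1, int k * int b - int d2)"
    and "\<forall>\<tau>\<in>set taus. \<not> on_pos_axes (bl_pos Q taus ms \<tau>)"
  then obtain w s j where bends: "\<And>c. c < length taus \<Longrightarrow>
      wall_bend (bl_pos Q taus ms (taus ! c)) (ms ! c) (ms ! Suc c) (w c) (s c) (j c)"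
    using broken_line_bend_directions wf by blast
  define n where "n = length taus"
  have ms0: "ms ! 0 = (- int d1, - int d2)" and "length ms = Suc n"
    using bl by (auto simp: broken_line_def n_def)
  then have msn: "ms ! n = (int k * int a - int d1, int k * int b - int d2)"
    using last by (metis diff_Suc_1 last_conv_nth list.size(3) nat.distinct(1))
  have "(\<Sum>c<n. j c * g (w c)) = g (ms ! n) - g (ms ! 0)" if "g = fst \<or> g = snd" for g
    using bends that
    by (auto simp: n_def wall_bend_def sum_lessThan_telescope[of "\<lambda>c. g (ms ! c)", symmetric]
        intro!: sum.cong)
  then have sum: "(\<Sum>c<n. j c * fst (w c)) = int k * int a" "(\<Sum>c<n. j c * snd (w c)) = int k * int b"
    using ms0 msn by auto
  have "n < 2"
    unfolding n_def using bl bends sum[unfolded n_def] k cw ccw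
    by (rule broken_line_at_most_one_bend)
  moreover have "n \<noteq> 0"
  proof
    assume "n = 0"
    with ms0 msn ab k show False by auto
  qed
  ultimately have "n = 1"
    by linarith
  then show "length taus = 1"
    by (simp add: n_def)
qed

lemma one_bending_special_pairs:
  fixes F :: "int \<times> int \<Rightarrow> 'k::field ser" and l1 l2 a b k :: nat
  assumes wf: "\<forall>d\<in>ray_dirs. is_wall_fn l1 l2 d (F d)" and ab: "a \<noteq> 0 \<or> b \<noteq> 0" and k: "1 \<le> k"
  shows "one_bending l1 l2 F (k*a*b + 1) (k*b^2) a b k"
    and "one_bending l1 l2 F (k*a^2) (k*a*b + 1) a b k"
proof -
  have "cross (int (k*a*b + 1), int (k*b^2)) (int a, int b) = int b"
    by (simp add: cross_def power2_eq_square algebra_simps)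
  then show "one_bending l1 l2 F (k*a*b + 1) (k*b^2) a b k"
    by (intro one_bending_if_cross_bounded[OF wf ab k]) (auto simp: power2_eq_square)
  have "cross (int (k*a^2), int (k*a*b + 1)) (int a, int b) = - int a"
    by (simp add: cross_def power2_eq_square algebra_simps)
  then show "one_bending l1 l2 F (k*a^2) (k*a*b + 1) a b k"
    by (intro one_bending_if_cross_bounded[OF wf ab k]) (auto simp: power2_eq_square)
qed

lemma cross_eq_with_large_snd:
  fixes a b :: nat and m :: int
  assumes "coprime a b" "0 < b" "0 < m"
  shows "\<exists>d1 d2. cross (int d1, int d2) (int a, int b) = m \<and> N \<le> d2"
proof -
  obtain u v where uv: "u * int b + v * int a = 1"
    using bezout_int[of "int b" "int a"] assms(1)
    by (auto simp: coprime_commute coprime_iff_gcd_eq_1)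
  txt \<open>\<open>(m u, - m v) + T (a, b)\<close> has cross product \<open>m\<close> with \<open>(a, b)\<close> for every \<open>T\<close>.\<close>
  define T where "T = int N + \<bar>m * v\<bar>"
  define D1 where "D1 = m * u + T * int a"
  define D2 where "D2 = T * int b - m * v"
  have cross: "D1 * int b - D2 * int a = m"
  proof -
    have "D1 * int b - D2 * int a = m * (u * int b + v * int a)"
      by (simp add: D1_def D2_def algebra_simps)
    with uv show ?thesis by simp
  qed
  have D2: "int N \<le> D2"
  proof -
    have "T \<le> T * int b"
      using assms(2) mult_left_mono[of 1 "int b" T] by (simp add: T_def)
    then show ?thesis
      using abs_ge_self[of "m * v"] by (simp add: D2_def T_def)
  qed
  have D1: "0 \<le> D1"
  proof -
    have "0 \<le> D2 * int a"
      using D2 by simp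
    then have "0 < D1 * int b"
      using cross assms(3) by linarith
    then show ?thesis
      using assms(2) by (simp add: zero_less_mult_iff)
  qed
  show ?thesis
    using cross D1 D2 by (intro exI[of _ "nat D1"] exI[of _ "nat D2"]) (simp add: cross_def)
qed

lemma infinite_cross_eq_large_snd:
  fixes a b :: nat and m K :: int
  assumes "coprime a b" "0 < b" "0 < m"
  shows "infinite {(d1, d2). cross (int d1, int d2) (int a, int b) = m \<and> K \<le> int d2}"
    (is "infinite ?S")
proof -
  have unbounded: "\<exists>d2\<in>snd ` ?S. N \<le> d2" for N
  proof -
    obtain d1 d2 where "cross (int d1, int d2) (int a, int b) = m" "max N (nat K) \<le> d2"
      using cross_eq_with_large_snd[OF assms] by blast
    then show ?thesis
      by (intro bexI[of _ d2]) (auto simp: image_iff)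
  qed
  have "infinite (snd ` ?S)"
  proof
    assume "finite (snd ` ?S)"
    then obtain M where "\<forall>d2\<in>snd ` ?S. d2 \<le> M"
      by (auto simp: finite_nat_set_iff_bounded_le)
    with unbounded[of "Suc M"] show False
      by fastforce
  qed
  then show ?thesis
    by (meson finite_imageI)
qed

lemma infinite_cross_eq_large_fst:
  fixes a b :: nat and m K :: int
  assumes "coprime a b" "0 < a" "0 < m"
  shows "infinite {(d1, d2). cross (int d1, int d2) (int a, int b) = - m \<and> K \<le> int d1}"
proof -
  have "{(d1, d2). cross (int d1, int d2) (int a, int b) = - m \<and> K \<le> int d1}
      = prod.swap ` {(d1, d2). cross (int d1, int d2) (int b, int a) = m \<and> K \<le> int d2}"
    by (force simp: cross_def)
  then show ?thesis
    using infinite_cross_eq_large_snd[of b a m K] assms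
    by (simp add: coprime_commute finite_image_iff)
qed

lemma infinite_one_bending_pairs:
  fixes F :: "int \<times> int \<Rightarrow> 'k::field ser" and l1 l2 a b k :: nat and m :: int
  assumes wf: "\<forall>d\<in>ray_dirs. is_wall_fn l1 l2 d (F d)" and cop: "coprime a b" and k: "1 \<le> k"
    and m: "0 < m"
  shows "infinite
    {(d1, d2). m = \<bar>int d1 * int b - int d2 * int a\<bar> \<and> one_bending l1 l2 F d1 d2 a b k}"
proof (cases "0 < b")
  case True
  have "m = \<bar>int d1 * int b - int d2 * int a\<bar> \<and> one_bending l1 l2 F d1 d2 a b k"
    if "cross (int d1, int d2) (int a, int b) = m" "m * int k * int b \<le> int d2" for d1 d2
    using that True m by (auto simp: cross_def intro!: one_bending_if_cross_bounded[OF wf _ k])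
  then have "{(d1, d2). cross (int d1, int d2) (int a, int b) = m \<and> m * int k * int b \<le> int d2}
      \<subseteq> {(d1, d2). m = \<bar>int d1 * int b - int d2 * int a\<bar> \<and> one_bending l1 l2 F d1 d2 a b k}"
    by auto
  then show ?thesis
    using infinite_cross_eq_large_snd[OF cop True m] by (rule infinite_super)
next
  case False
  with cop have a: "0 < a"
    by auto
  have "m = \<bar>int d1 * int b - int d2 * int a\<bar> \<and> one_bending l1 l2 F d1 d2 a b k"
    if "cross (int d1, int d2) (int a, int b) = - m" "m * int k * int a \<le> int d1" for d1 d2
    using that a m by (auto simp: cross_def intro!: one_bending_if_cross_bounded[OF wf _ k])
  then have "{(d1, d2). cross (int d1, int d2) (int a, int b) = - m \<and> m * int k * int a \<le> int d1}
      \<subseteq> {(d1, d2). m = \<bar>int d1 * int b - int d2 * int a\<bar> \<and> one_bending l1 l2 F d1 d2 a b k}"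
    by auto
  then show ?thesis
    using infinite_cross_eq_large_fst[OF cop a m] by (rule infinite_super)
qed

theorem corollary5p12:
  fixes F :: "int \<times> int \<Rightarrow> 'k::field_char_0 ser" and l1 l2 a b k :: nat
  assumes "1 \<le> l1" and "1 \<le> l2" and "scat_consistent l1 l2 F"
    and "coprime a b" and "1 \<le> k"
  shows "(\<forall>d1 d2. ((d1, d2) = (k*a*b + 1, k*b^2) \<or> (d1, d2) = (k*a^2, k*a*b + 1))
            \<longrightarrow> one_bending l1 l2 F d1 d2 a b k)
       \<and> (\<forall>d1 d2. int d1 * int b - int d2 * int a \<noteq> 0 \<and>
            ((int d1 * int b - int d2 * int a < 0 \<and>
                int d1 \<ge> \<bar>int d1 * int b - int d2 * int a\<bar> * int k * int a) \<or>
             (int d1 * int b - int d2 * int a > 0 \<and>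
                int d2 \<ge> \<bar>int d1 * int b - int d2 * int a\<bar> * int k * int b))
            \<longrightarrow> one_bending l1 l2 F d1 d2 a b k)
       \<and> (\<forall>m::int. 0 < m \<longrightarrow>
            infinite {(d1, d2). m = \<bar>int d1 * int b - int d2 * int a\<bar> \<and>
                                one_bending l1 l2 F d1 d2 a b k})"
proof -
  have wf: "\<forall>d\<in>ray_dirs. is_wall_fn l1 l2 d (F d)"
    using assms(3) by (simp add: scat_consistent_def)
  have ab: "a \<noteq> 0 \<or> b \<noteq> 0"
    using assms(4) by auto
  show ?thesis
    using one_bending_special_pairs[OF wf ab assms(5)] infinite_one_bending_pairs[OF wf assms(4,5)]
    by (auto intro!: one_bending_if_cross_bounded[OF wf ab assms(5)] simp: cross_def)
qed

end
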